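(* Let $n$ be a positive integer, let $\dot C_t$ be a colored chain on $t$ vertices, and let $\alpha=\alpha(\dot C_t)$. Then $$\tilde{R}(\dot C^{(rbr)}_{\alpha},Q_n)\le \tilde{R}(\dot C_t,Q_n)\le \tilde{R}(\dot C^{(rbr)}_{\alpha},Q_n)+t-\alpha.$$
   Context: A chain $C_t$ is a poset on $t$ pairwise comparable vertices; a colored chain has each vertex colored blue or red. The red-alternating chain $\dot C_a^{(rbr)}$ is $C_a$ colored alternately red and blue starting with a red minimal vertex; the blue-alternating chain $\dot C_a^{(brb)}$ is colored alternately starting with a blue minimal vertex. For a colored chain $\dot C$, $\alpha(\dot C)$ is the maximum $a$ such that $\dot C$ contains a copy of $\dot C_a^{(rbr)}$ or of $\dot C_a^{(brb)}$ (i.e. a subchain of $a$ vertices colored in that way). $Q_N$ is the Boolean lattice of all subsets of an $N$-element set ordered by inclusion. In a blue/red coloring of $Q_N$, a copy of a colored poset $\dot P$ is an induced subposet isomorphic to $P$ with matching colors. The poset Erdős–Hajnal number $\tilde{R}(\dot P,Q_n)$ is the minimum $N$ such that every blue/red coloring of $Q_N$ contains a copy of $\dot P$ or a monochromatic induced copy of $Q_n$. *)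

theory Defs
  imports Main "HOL-Library.Sublist"
begin

datatype color = Blue | Red

text \<open>A colored chain on t vertices is a list of t colors, listed from the minimal
  vertex (index 0) to the maximal vertex.\<close>
type_synonym cchain = "color list"

definition rbr_chain :: "nat \<Rightarrow> cchain" where
  "rbr_chain a = map (\<lambda>i. if even i then Red else Blue) [0..<a]"

definition brb_chain :: "nat \<Rightarrow> cchain" where
  "brb_chain a = map (\<lambda>i. if even i then Blue else Red) [0..<a]"

definition alpha :: "cchain \<Rightarrow> nat" where
  "alpha ch = Max {a. subseq (rbr_chain a) ch \<or> subseq (brb_chain a) ch}"

text \<open>Q_N is the power set of {0..<N}; a blue/red coloring is c :: nat set => color
  (only its values on subsets of {0..<N} matter). A copy of a colored chain is a
  strictly increasing sequence of elements of Q_N with matching colors (any set of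
  pairwise comparable elements induces a chain).\<close>
definition contains_chain :: "nat \<Rightarrow> (nat set \<Rightarrow> color) \<Rightarrow> cchain \<Rightarrow> bool" where
  "contains_chain N c ch \<longleftrightarrow>
     (\<exists>S :: nat \<Rightarrow> nat set.
        (\<forall>i < length ch. S i \<subseteq> {0..<N} \<and> c (S i) = ch ! i) \<and>
        (\<forall>i j. i < j \<and> j < length ch \<longrightarrow> S i \<subset> S j))"

definition contains_mono_Q :: "nat \<Rightarrow> (nat set \<Rightarrow> color) \<Rightarrow> nat \<Rightarrow> bool" where
  "contains_mono_Q N c n \<longleftrightarrow>
     (\<exists>(f :: nat set \<Rightarrow> nat set) col.
        (\<forall>A. A \<subseteq> {0..<n} \<longrightarrow> f A \<subseteq> {0..<N} \<and> c (f A) = col) \<and>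
        (\<forall>A B. A \<subseteq> {0..<n} \<longrightarrow> B \<subseteq> {0..<n} \<longrightarrow> (f A \<subseteq> f B \<longleftrightarrow> A \<subseteq> B)))"

definition poset_EH :: "cchain \<Rightarrow> nat \<Rightarrow> nat" where
  "poset_EH ch n = (LEAST N. \<forall>c :: nat set \<Rightarrow> color.
       contains_chain N c ch \<or> contains_mono_Q N c n)"

end

(*
  Collapsing the runs of equal colours of a chain C turns it into remdups_adj C, an alternating
  chain; hence it is the red- or the blue-alternating chain on alpha(C) vertices, and swapping the
  two colours of a colouring shows that these two have the same Erdos-Hajnal number.  Every copy of
  C contains a copy of remdups_adj C, which gives the lower bound.  For the upper bound, C arises
  from remdups_adj C by t - alpha(C) duplications of a vertex, and a duplication costs at most one
  extra dimension: given a colouring of Q_(N+1), add the new ground element N to every set lying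
  above the top of a copy of the prefix ending in the duplicated vertex, and pull the colouring
  back to Q_N along this embedding.
*)
theory Submission
  imports Defs
begin

section \<open>Chains and cube embeddings\<close>

definition cube_chain :: "nat \<Rightarrow> nat set list \<Rightarrow> bool" where
  "cube_chain N Ss \<longleftrightarrow> sorted_wrt (\<subset>) Ss \<and> (\<forall>S\<in>set Ss. S \<subseteq> {0..<N})"

lemma cube_chain_Nil [simp]: "cube_chain N []"
  by (simp add: cube_chain_def)

lemma cube_chain_subset: "cube_chain N Ss \<Longrightarrow> S \<in> set Ss \<Longrightarrow> S \<subseteq> {0..<N}"
  by (simp add: cube_chain_def)

lemma cube_chain_Cons:
  "cube_chain N (S # Ss) \<longleftrightarrow> S \<subseteq> {0..<N} \<and> (\<forall>T\<in>set Ss. S \<subset> T) \<and> cube_chain N Ss"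
  by (auto simp: cube_chain_def)

lemma cube_chain_append:
  "cube_chain N (Ss @ Ts) \<longleftrightarrow> cube_chain N Ss \<and> cube_chain N Ts \<and> (\<forall>S\<in>set Ss. \<forall>T\<in>set Ts. S \<subset> T)"
  by (auto simp: cube_chain_def sorted_wrt_append)

lemma cube_chain_mono: "cube_chain N Ss \<Longrightarrow> N \<le> M \<Longrightarrow> cube_chain M Ss"
  by (fastforce simp: cube_chain_def)

lemma cube_chain_subseq: "subseq Ss Ts \<Longrightarrow> cube_chain N Ts \<Longrightarrow> cube_chain N Ss"
  by (induction rule: list_emb.induct) (auto simp: cube_chain_Cons elim: list_emb_set)

lemma contains_chain_iff: "contains_chain N c ch \<longleftrightarrow> (\<exists>Ss. cube_chain N Ss \<and> map c Ss = ch)"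
proof
  assume "contains_chain N c ch"
  then obtain S where S: "\<forall>i < length ch. S i \<subseteq> {0..<N} \<and> c (S i) = ch ! i"
    and strict: "\<forall>i j. i < j \<and> j < length ch \<longrightarrow> S i \<subset> S j"
    unfolding contains_chain_def by blast
  define Ss where "Ss = map S [0..<length ch]"
  have "sorted_wrt (\<subset>) Ss"
    unfolding Ss_def sorted_wrt_iff_nth_less using strict by simp
  moreover have "\<forall>X\<in>set Ss. X \<subseteq> {0..<N}"
    using S by (auto simp: Ss_def)
  moreover have "map c Ss = ch"
    using S by (intro nth_equalityI) (simp_all add: Ss_def)
  ultimately show "\<exists>Ss. cube_chain N Ss \<and> map c Ss = ch"
    unfolding cube_chain_def by blast
next
  assume "\<exists>Ss. cube_chain N Ss \<and> map c Ss = ch"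
  then obtain Ss where Ss: "sorted_wrt (\<subset>) Ss" "\<forall>X\<in>set Ss. X \<subseteq> {0..<N}" "map c Ss = ch"
    unfolding cube_chain_def by blast
  have "\<forall>i < length ch. Ss ! i \<subseteq> {0..<N} \<and> c (Ss ! i) = ch ! i"
    using Ss(2,3) by auto
  moreover have "\<forall>i j. i < j \<and> j < length ch \<longrightarrow> Ss ! i \<subset> Ss ! j"
    using Ss(1) Ss(3)[symmetric] by (simp add: sorted_wrt_iff_nth_less)
  ultimately show "contains_chain N c ch"
    unfolding contains_chain_def by blast
qed

lemma contains_chain_subseq:
  assumes "subseq ch' ch" and "contains_chain N c ch"
  shows "contains_chain N c ch'"
proof -
  obtain Ss where Ss: "cube_chain N Ss" "map c Ss = ch"
    using assms(2) unfolding contains_chain_iff by blast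
  obtain I where "ch' = nths ch I"
    using assms(1) unfolding subseq_conv_nths by blast
  then have "map c (nths Ss I) = ch'"
    using Ss(2)[symmetric] by (simp add: nths_map)
  moreover have "cube_chain N (nths Ss I)"
    by (rule cube_chain_subseq[OF _ Ss(1)]) (auto simp: subseq_conv_nths)
  ultimately show ?thesis
    unfolding contains_chain_iff by blast
qed

definition cube_embedding :: "nat \<Rightarrow> nat \<Rightarrow> (nat set \<Rightarrow> nat set) \<Rightarrow> bool" where
  "cube_embedding N M g \<longleftrightarrow> (\<forall>S \<subseteq> {0..<N}. g S \<subseteq> {0..<M}) \<and>
     (\<forall>S T. S \<subseteq> {0..<N} \<longrightarrow> T \<subseteq> {0..<N} \<longrightarrow> (g S \<subseteq> g T \<longleftrightarrow> S \<subseteq> T))"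

lemma cube_embedding_comp:
  assumes "cube_embedding N M g" and "cube_embedding n N f"
  shows "cube_embedding n M (g \<circ> f)"
  using assms by (simp add: cube_embedding_def)

lemma cube_embedding_psubset:
  assumes "cube_embedding N M g" and "S \<subseteq> {0..<N}" "T \<subseteq> {0..<N}" "S \<subset> T"
  shows "g S \<subset> g T"
proof -
  have "g S \<subseteq> g T \<longleftrightarrow> S \<subseteq> T" "g T \<subseteq> g S \<longleftrightarrow> T \<subseteq> S"
    using assms(1-3) by (simp_all add: cube_embedding_def)
  then show ?thesis
    using assms(4) by (simp add: subset_not_subset_eq)
qed

lemma cube_embedding_union:
  assumes "N \<le> M" and "E \<subseteq> {N..<M}"
  shows "cube_embedding N M (\<lambda>S. S \<union> E)"
  unfolding cube_embedding_def
proof (intro conjI allI impI)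
  fix S T assume S: "S \<subseteq> {0..<N}" and T: "T \<subseteq> {0..<N}"
  have "S \<inter> E = {}"
    using S assms(2) by fastforce
  then show "S \<union> E \<subseteq> T \<union> E \<longleftrightarrow> S \<subseteq> T"
    by blast
next
  fix S :: "nat set" assume "S \<subseteq> {0..<N}"
  then show "S \<union> E \<subseteq> {0..<M}"
    using assms by auto
qed

lemma cube_embedding_shift:
  assumes "N + n \<le> M"
  shows "cube_embedding n M (\<lambda>A. (+) N ` A)"
  using assms unfolding cube_embedding_def by auto

lemma cube_embedding_insert_upset:
  assumes "\<And>S T. S \<in> U \<Longrightarrow> S \<subseteq> T \<Longrightarrow> T \<in> U"
  shows "cube_embedding N (Suc N) (\<lambda>S. if S \<in> U then insert N S else S)"
  using assms unfolding cube_embedding_def by auto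

lemma cube_chain_map:
  assumes "cube_embedding N M g" and "cube_chain N Ss"
  shows "cube_chain M (map g Ss)"
proof -
  have sorted: "sorted_wrt (\<subset>) Ss" and sub: "\<forall>S\<in>set Ss. S \<subseteq> {0..<N}"
    using assms(2) by (simp_all add: cube_chain_def)
  have "sorted_wrt (\<lambda>S T. g S \<subset> g T) Ss"
  proof (rule sorted_wrt_mono_rel[OF _ sorted])
    fix S T assume "S \<in> set Ss" "T \<in> set Ss" "S \<subset> T"
    then show "g S \<subset> g T"
      using sub by (intro cube_embedding_psubset[OF assms(1)]) simp_all
  qed
  moreover have "\<forall>S\<in>set Ss. g S \<subseteq> {0..<M}"
    using assms(1) sub by (simp add: cube_embedding_def)
  ultimately show ?thesis
    by (simp add: cube_chain_def sorted_wrt_map)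
qed

lemma contains_mono_Q_iff:
  "contains_mono_Q N c n \<longleftrightarrow> (\<exists>f col. cube_embedding n N f \<and> (\<forall>A \<subseteq> {0..<n}. c (f A) = col))"
proof
  assume "contains_mono_Q N c n"
  then obtain f col where maps: "\<forall>A. A \<subseteq> {0..<n} \<longrightarrow> f A \<subseteq> {0..<N} \<and> c (f A) = col"
    and emb: "\<forall>A B. A \<subseteq> {0..<n} \<longrightarrow> B \<subseteq> {0..<n} \<longrightarrow> (f A \<subseteq> f B \<longleftrightarrow> A \<subseteq> B)"
    unfolding contains_mono_Q_def by metis
  have "cube_embedding n N f"
    using maps emb by (simp add: cube_embedding_def)
  moreover have "\<forall>A \<subseteq> {0..<n}. c (f A) = col"
    using maps by simp
  ultimately show "\<exists>f col. cube_embedding n N f \<and> (\<forall>A \<subseteq> {0..<n}. c (f A) = col)"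
    by blast
next
  assume "\<exists>f col. cube_embedding n N f \<and> (\<forall>A \<subseteq> {0..<n}. c (f A) = col)"
  then obtain f col where "cube_embedding n N f" "\<forall>A \<subseteq> {0..<n}. c (f A) = col"
    by blast
  then show "contains_mono_Q N c n"
    unfolding contains_mono_Q_def cube_embedding_def by (intro exI[of _ f] exI[of _ col]) simp
qed

section \<open>The arrow relation\<close>

definition arrows :: "nat \<Rightarrow> cchain \<Rightarrow> nat \<Rightarrow> bool" where
  "arrows N ch n \<longleftrightarrow> (\<forall>c. contains_chain N c ch \<or> contains_mono_Q N c n)"

lemma poset_EH_eq_Least: "poset_EH ch n = (LEAST N. arrows N ch n)"
  by (simp add: poset_EH_def arrows_def)

lemma arrows_pullback:
  assumes "arrows N ch n" and "cube_embedding N M g"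
  shows "(\<exists>Ss. cube_chain N Ss \<and> map (c \<circ> g) Ss = ch) \<or> contains_mono_Q M c n"
proof -
  have "contains_chain N (c \<circ> g) ch \<or> contains_mono_Q N (c \<circ> g) n"
    using assms(1) by (simp add: arrows_def)
  then show ?thesis
  proof
    assume "contains_chain N (c \<circ> g) ch"
    then show ?thesis
      by (simp add: contains_chain_iff)
  next
    assume "contains_mono_Q N (c \<circ> g) n"
    then obtain f col where "cube_embedding n N f" "\<forall>A \<subseteq> {0..<n}. c (g (f A)) = col"
      unfolding contains_mono_Q_iff by auto
    then have "contains_mono_Q M c n"
      unfolding contains_mono_Q_iff using cube_embedding_comp[OF assms(2)]
      by (intro exI[of _ "g \<circ> f"] exI[of _ col]) simp
    then show ?thesis ..
  qed
qed

lemma arrows_subseq: "subseq ch' ch \<Longrightarrow> arrows N ch n \<Longrightarrow> arrows N ch' n"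
  unfolding arrows_def using contains_chain_subseq by blast

fun swap_color :: "color \<Rightarrow> color" where
  "swap_color Red = Blue"
| "swap_color Blue = Red"

lemma swap_color_swap_color [simp]: "swap_color (swap_color z) = z"
  by (cases z) simp_all

lemma neq_iff_eq_swap_color: "y \<noteq> z \<longleftrightarrow> y = swap_color z"
  by (cases y; cases z) simp_all

lemma arrows_map_swap_colorI:
  assumes "arrows N ch n"
  shows "arrows N (map swap_color ch) n"
  unfolding arrows_def
proof
  fix c :: "nat set \<Rightarrow> color"
  have "contains_chain N (swap_color \<circ> c) ch \<or> contains_mono_Q N (swap_color \<circ> c) n"
    using assms by (simp add: arrows_def)
  then show "contains_chain N c (map swap_color ch) \<or> contains_mono_Q N c n"
  proof
    assume "contains_chain N (swap_color \<circ> c) ch"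
    then obtain Ss where "cube_chain N Ss" "map (swap_color \<circ> c) Ss = ch"
      unfolding contains_chain_iff by metis
    then have "cube_chain N Ss \<and> map c Ss = map swap_color ch"
      by auto
    then show ?thesis
      unfolding contains_chain_iff by blast
  next
    assume "contains_mono_Q N (swap_color \<circ> c) n"
    then obtain f col where "cube_embedding n N f" "\<forall>A \<subseteq> {0..<n}. swap_color (c (f A)) = col"
      unfolding contains_mono_Q_iff by auto
    then have "cube_embedding n N f \<and> (\<forall>A \<subseteq> {0..<n}. c (f A) = swap_color col)"
      by auto
    then show ?thesis
      unfolding contains_mono_Q_iff by blast
  qed
qed

lemma arrows_map_swap_color [simp]: "arrows N (map swap_color ch) n \<longleftrightarrow> arrows N ch n"
  using arrows_map_swap_colorI[of N "map swap_color ch" n] arrows_map_swap_colorI[of N ch n]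
  by (auto simp: comp_def)

text \<open>With a block \<open>E\<close> of \<open>n + 1\<close> new ground elements: either a proper subset of \<open>E\<close>
  has colour \<open>z\<close> and lies below the copy of \<open>ch\<close> lifted by \<open>\<union> E\<close>, or the proper subsets
  of \<open>E\<close>, which contain a copy of \<open>Q\<^sub>n\<close>, all have the other colour.\<close>
lemma arrows_Cons:
  assumes "arrows N ch n"
  shows "arrows (N + Suc n) (z # ch) n"
  unfolding arrows_def
proof
  fix c :: "nat set \<Rightarrow> color"
  define E where "E = {N..<N + Suc n}"
  show "contains_chain (N + Suc n) c (z # ch) \<or> contains_mono_Q (N + Suc n) c n"
  proof (cases "\<exists>P \<subset> E. c P = z")
    case True
    then obtain P where P: "P \<subset> E" "c P = z"
      by blast
    have emb: "cube_embedding N (N + Suc n) (\<lambda>S. S \<union> E)"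
      by (rule cube_embedding_union) (simp_all add: E_def)
    from arrows_pullback[OF assms emb, of c] show ?thesis
    proof
      assume "\<exists>Ss. cube_chain N Ss \<and> map (c \<circ> (\<lambda>S. S \<union> E)) Ss = ch"
      then obtain Ss where Ss: "cube_chain N Ss" "map (c \<circ> (\<lambda>S. S \<union> E)) Ss = ch"
        by metis
      have "cube_chain (N + Suc n) (P # map (\<lambda>S. S \<union> E) Ss)"
        unfolding cube_chain_Cons using P(1) cube_chain_map[OF emb Ss(1)] by (auto simp: E_def)
      moreover have "map c (P # map (\<lambda>S. S \<union> E) Ss) = z # ch"
        using P(2) Ss(2) by simp
      ultimately show ?thesis
        unfolding contains_chain_iff by (intro disjI1 exI conjI)
    qed (rule disjI2)
  next
    case False
    define f where "f = (\<lambda>A. (+) N ` A)"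
    have "cube_embedding n (N + Suc n) f"
      unfolding f_def by (rule cube_embedding_shift) simp
    moreover have "c (f A) = swap_color z" if "A \<subseteq> {0..<n}" for A
    proof -
      have "f A \<subseteq> E" "N + n \<in> E - f A"
        using that unfolding f_def E_def by auto
      then have "f A \<subset> E"
        by blast
      then show ?thesis
        using False neq_iff_eq_swap_color by blast
    qed
    ultimately show ?thesis
      unfolding contains_mono_Q_iff by (intro disjI2) blast
  qed
qed

lemma arrows_exists: "\<exists>N. arrows N ch n"
proof (induction ch)
  case Nil
  have "arrows 0 [] n"
    by (simp add: arrows_def contains_chain_iff)
  then show ?case ..
next
  case (Cons z ch)
  then show ?case
    using arrows_Cons by blast
qed

lemma arrows_poset_EH: "arrows (poset_EH ch n) ch n"
  unfolding poset_EH_eq_Least using arrows_exists by (rule LeastI_ex)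

lemma poset_EH_le: "arrows N ch n \<Longrightarrow> poset_EH ch n \<le> N"
  unfolding poset_EH_eq_Least by (rule Least_le)

lemma poset_EH_subseq: "subseq ch' ch \<Longrightarrow> poset_EH ch' n \<le> poset_EH ch n"
  by (intro poset_EH_le arrows_subseq[OF _ arrows_poset_EH])

lemma poset_EH_map_swap_color: "poset_EH (map swap_color ch) n = poset_EH ch n"
  by (simp add: poset_EH_eq_Least)

section \<open>Duplicating a vertex\<close>

lemma cube_chain_append_lifted:
  assumes "cube_chain N Ts" "\<forall>T\<in>set Ts. T \<subseteq> Q" "cube_chain N (Q # Rs)"
    and "cube_embedding N (Suc N) g" "g Q = insert N Q"
  shows "cube_chain (Suc N) (Ts @ map g (Q # Rs))"
proof -
  have "\<forall>T\<in>set Ts. \<forall>R'\<in>set (map g (Q # Rs)). T \<subset> R'"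
  proof (intro ballI)
    fix T R' assume T: "T \<in> set Ts" and "R' \<in> set (map g (Q # Rs))"
    then obtain R where R: "R \<in> set (Q # Rs)" "R' = g R"
      by auto
    have "Q \<subseteq> R"
      using assms(3) R(1) by (auto simp: cube_chain_Cons)
    moreover have "Q \<subseteq> {0..<N}" "R \<subseteq> {0..<N}"
      using cube_chain_subset[OF assms(3)] R(1) by auto
    ultimately have "insert N Q \<subseteq> g R"
      using assms(4,5) unfolding cube_embedding_def by metis
    moreover have "T \<subseteq> Q" "N \<notin> T"
      using assms(2) T cube_chain_subset[OF assms(1) T] by auto
    ultimately show "T \<subset> R'"
      using R(2) by blast
  qed
  then show ?thesis
    using cube_chain_mono[OF assms(1)] cube_chain_map[OF assms(4,3)] by (simp add: cube_chain_append)
qed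

text \<open>In a copy \<open>Ps @ Q # Rs\<close> of \<open>xs @ x # ys\<close> for the pulled-back colouring, \<open>Q \<in> U\<close>,
  since otherwise \<open>Ps @ [Q]\<close> itself witnesses \<open>Q \<in> U\<close>; a copy of \<open>xs @ [x]\<close> below \<open>Q\<close>
  followed by the lifted \<open>Q # Rs\<close> is then a copy of \<open>xs @ x # x # ys\<close>.\<close>
lemma arrows_duplicate:
  assumes "arrows N (xs @ x # ys) n"
  shows "arrows (Suc N) (xs @ x # x # ys) n"
  unfolding arrows_def
proof
  fix c :: "nat set \<Rightarrow> color"
  define U where "U = {S. \<exists>Ts. cube_chain N Ts \<and> map c Ts = xs @ [x] \<and> (\<forall>T\<in>set Ts. T \<subseteq> S)}"
  define g where "g S = (if S \<in> U then insert N S else S)" for S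
  have U_mono: "S \<in> U \<Longrightarrow> S \<subseteq> T \<Longrightarrow> T \<in> U" for S T
    unfolding U_def by blast
  have emb: "cube_embedding N (Suc N) g"
    unfolding g_def using U_mono by (rule cube_embedding_insert_upset)
  from arrows_pullback[OF assms emb, of c]
  show "contains_chain (Suc N) c (xs @ x # x # ys) \<or> contains_mono_Q (Suc N) c n"
  proof
    assume "\<exists>Ss. cube_chain N Ss \<and> map (c \<circ> g) Ss = xs @ x # ys"
    then obtain Ps Q Rs where chain: "cube_chain N (Ps @ Q # Rs)"
      and colors: "map (c \<circ> g) Ps = xs" "c (g Q) = x" "map (c \<circ> g) Rs = ys"
      by (auto simp: map_eq_append_conv)
    have below_Q: "\<forall>P\<in>set Ps. P \<subseteq> Q"
      using chain by (auto simp: cube_chain_append cube_chain_Cons)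
    have "Q \<in> U"
    proof (rule ccontr)
      assume "Q \<notin> U"
      then have "\<forall>P\<in>set (Ps @ [Q]). g P = P"
        using below_Q U_mono unfolding g_def by auto
      then have "map c (Ps @ [Q]) = xs @ [x]"
        using colors(1,2) by auto
      moreover have "cube_chain N (Ps @ [Q])"
        using chain by (auto simp: cube_chain_append cube_chain_Cons)
      ultimately have "Q \<in> U"
        using below_Q unfolding U_def by (intro CollectI exI[of _ "Ps @ [Q]"]) auto
      with \<open>Q \<notin> U\<close> show False ..
    qed
    then obtain Ts where Ts: "cube_chain N Ts" "map c Ts = xs @ [x]" "\<forall>T\<in>set Ts. T \<subseteq> Q"
      unfolding U_def by blast
    have "cube_chain N (Q # Rs)"
      using chain by (simp add: cube_chain_append)
    moreover have "g Q = insert N Q"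
      using \<open>Q \<in> U\<close> by (simp add: g_def)
    ultimately have "cube_chain (Suc N) (Ts @ map g (Q # Rs))"
      by (rule cube_chain_append_lifted[OF Ts(1,3) _ emb])
    moreover have "map c (Ts @ map g (Q # Rs)) = xs @ x # x # ys"
      using Ts(2) colors(2,3) by simp
    ultimately show ?thesis
      unfolding contains_chain_iff by (intro disjI1 exI conjI)
  qed (rule disjI2)
qed

lemma arrows_remdups_adj:
  "arrows N (xs @ remdups_adj ys) n \<Longrightarrow>
   arrows (N + (length ys - length (remdups_adj ys))) (xs @ ys) n"
proof (induction ys arbitrary: xs N rule: remdups_adj.induct)
  case (3 y z zs)
  show ?case
  proof (cases "y = z")
    case True
    have "length (remdups_adj (y # zs)) \<le> length (y # zs)"
      by (rule remdups_adj_length)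
    moreover have "arrows (N + (length (y # zs) - length (remdups_adj (y # zs)))) (xs @ y # zs) n"
      using "3.IH"(1)[OF True] "3.prems" True by simp
    ultimately show ?thesis
      using arrows_duplicate True by (fastforce simp: Suc_diff_le)
  next
    case False
    then show ?thesis
      using "3.IH"(2)[OF False, where xs = "xs @ [y]"] "3.prems" by simp
  qed
qed simp_all

lemma poset_EH_le_remdups_adj:
  "poset_EH ch n \<le> poset_EH (remdups_adj ch) n + (length ch - length (remdups_adj ch))"
  using arrows_remdups_adj[of _ "[]"] arrows_poset_EH by (simp add: poset_EH_le)

section \<open>Alternating chains\<close>

lemma remdups_adj_Cons_if:
  "remdups_adj (x # xs) = (if xs \<noteq> [] \<and> hd xs = x then remdups_adj xs else x # remdups_adj xs)"
  by (cases xs) auto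

lemma subseq_remdups_adj_Cons: "subseq (remdups_adj xs) (remdups_adj (x # xs))"
proof (cases "xs \<noteq> [] \<and> hd xs = x")
  case True
  then show ?thesis
    by (simp add: remdups_adj_Cons_if)
next
  case False
  then show ?thesis
    by (simp add: remdups_adj_Cons_if list_emb_Cons[OF subseq_order.refl])
qed

lemma subseq_remdups_adj: "subseq (remdups_adj xs) xs"
proof (induction xs rule: remdups_adj.induct)
  case (3 x y xs)
  then show ?case
    by (cases "x = y") (simp_all add: list_emb_Cons)
qed simp_all

lemma remdups_adj_eq_hd_Cons: "xs \<noteq> [] \<Longrightarrow> remdups_adj xs = hd xs # tl (remdups_adj xs)"
  by (cases xs) simp_all

lemma subseq_remdups_adj_mono:
  "subseq xs ys \<Longrightarrow> subseq (remdups_adj xs) (remdups_adj ys)"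
proof (induction rule: list_emb.induct)
  case (list_emb_Cons xs ys y)
  then show ?case
    using subseq_order.trans subseq_remdups_adj_Cons by metis
next
  case (list_emb_Cons2 x y xs ys)
  then have "y = x" by simp
  show ?case
  proof (cases "xs \<noteq> [] \<and> hd xs = x")
    case True
    then have "remdups_adj (x # xs) = remdups_adj xs"
      by (simp add: remdups_adj_Cons_if)
    then show ?thesis
      using list_emb_Cons2.IH subseq_order.trans subseq_remdups_adj_Cons by metis
  next
    case xs_fresh: False
    then have rx: "remdups_adj (x # xs) = x # remdups_adj xs"
      by (simp add: remdups_adj_Cons_if)
    show ?thesis
    proof (cases "ys \<noteq> [] \<and> hd ys = x")
      case True
      then have ry: "remdups_adj ys = x # tl (remdups_adj ys)"
        using remdups_adj_eq_hd_Cons by fastforce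
      have tl_sub: "subseq (remdups_adj xs) (tl (remdups_adj ys))"
      proof (cases xs)
        case (Cons u us)
        then have "remdups_adj xs = u # tl (remdups_adj xs)" "u \<noteq> x"
          using xs_fresh remdups_adj_eq_hd_Cons by simp_all
        then show ?thesis
          using list_emb_Cons2.IH ry subseq_Cons2_neq by metis
      qed simp
      have "remdups_adj (y # ys) = remdups_adj ys"
        using True \<open>y = x\<close> by (simp add: remdups_adj_Cons_if)
      then show ?thesis
        using rx ry tl_sub by (metis subseq_Cons2)
    next
      case False
      then have "remdups_adj (y # ys) = x # remdups_adj ys"
        using \<open>y = x\<close> by (auto simp: remdups_adj_Cons_if)
      then show ?thesis
        using rx list_emb_Cons2.IH by simp
    qed
  qed
qed simp

lemma rbr_chain_simps [simp]:
  "rbr_chain 0 = []" "rbr_chain (Suc a) = Red # brb_chain a"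
  by (simp_all add: rbr_chain_def brb_chain_def map_upt_Suc del: upt_Suc)

lemma brb_chain_simps [simp]:
  "brb_chain 0 = []" "brb_chain (Suc a) = Blue # rbr_chain a"
  by (simp_all add: rbr_chain_def brb_chain_def map_upt_Suc del: upt_Suc)

lemma length_rbr_brb_chain [simp]: "length (rbr_chain a) = a" "length (brb_chain a) = a"
  by (simp_all add: rbr_chain_def brb_chain_def)

lemma rbr_chain_eq_map_swap_color: "rbr_chain a = map swap_color (brb_chain a)"
  by (simp add: rbr_chain_def brb_chain_def)

lemma distinct_adj_rbr_brb_chain: "distinct_adj (rbr_chain a) \<and> distinct_adj (brb_chain a)"
proof (induction a)
  case (Suc a)
  then show ?case
    by (cases a) (simp_all add: distinct_adj_Cons)
qed simp

lemma remdups_adj_rbr_brb_chain [simp]: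
  "remdups_adj (rbr_chain a) = rbr_chain a" "remdups_adj (brb_chain a) = brb_chain a"
  using distinct_adj_rbr_brb_chain[of a] by (simp_all add: distinct_adj_altdef)

lemma distinct_adj_imp_rbr_or_brb_chain:
  "distinct_adj ch \<Longrightarrow> ch = rbr_chain (length ch) \<or> ch = brb_chain (length ch)"
proof (induction ch)
  case (Cons z ch)
  have "ch = rbr_chain (length ch) \<or> ch = brb_chain (length ch)"
    using Cons.IH[OF distinct_adj_ConsD[OF Cons.prems]] .
  moreover have "ch = [] \<or> z \<noteq> hd ch"
    using Cons.prems by (auto simp: distinct_adj_Cons)
  ultimately show ?case
    by (cases z; cases "length ch") auto
qed simp

lemma alternating_subseq_length_le:
  "subseq (rbr_chain a) ch \<or> subseq (brb_chain a) ch \<Longrightarrow> a \<le> length ch"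
  by (elim disjE; drule list_emb_length) simp_all

lemma alpha_eq_length_remdups_adj: "alpha ch = length (remdups_adj ch)"
  unfolding alpha_def
proof (rule Max_eqI)
  have "{a. subseq (rbr_chain a) ch \<or> subseq (brb_chain a) ch} \<subseteq> {..length ch}"
    by (simp add: subset_eq alternating_subseq_length_le)
  then show "finite {a. subseq (rbr_chain a) ch \<or> subseq (brb_chain a) ch}"
    by (rule finite_subset) simp
next
  fix a assume "a \<in> {a. subseq (rbr_chain a) ch \<or> subseq (brb_chain a) ch}"
  then have "subseq (rbr_chain a) ch \<or> subseq (brb_chain a) ch"
    by simp
  then have "subseq (rbr_chain a) (remdups_adj ch) \<or> subseq (brb_chain a) (remdups_adj ch)"
    using subseq_remdups_adj_mono[of "rbr_chain a" ch] subseq_remdups_adj_mono[of "brb_chain a" ch]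
    by (elim disjE) simp_all
  then show "a \<le> length (remdups_adj ch)"
    by (rule alternating_subseq_length_le)
next
  have "remdups_adj ch = rbr_chain (length (remdups_adj ch)) \<or>
        remdups_adj ch = brb_chain (length (remdups_adj ch))"
    by (rule distinct_adj_imp_rbr_or_brb_chain[OF distinct_adj_remdups_adj])
  then show "length (remdups_adj ch) \<in> {a. subseq (rbr_chain a) ch \<or> subseq (brb_chain a) ch}"
    using subseq_remdups_adj[of ch] by auto
qed

lemma poset_EH_remdups_adj: "poset_EH (remdups_adj ch) n = poset_EH (rbr_chain (alpha ch)) n"
  using distinct_adj_imp_rbr_or_brb_chain[OF distinct_adj_remdups_adj, of ch]
  by (metis alpha_eq_length_remdups_adj poset_EH_map_swap_color rbr_chain_eq_map_swap_color)

theorem theorem4: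
  fixes n :: nat and ch :: cchain
  assumes "n \<ge> 1"
  shows "poset_EH (rbr_chain (alpha ch)) n \<le> poset_EH ch n \<and>
         poset_EH ch n \<le> poset_EH (rbr_chain (alpha ch)) n + length ch - alpha ch"
proof
  show "poset_EH (rbr_chain (alpha ch)) n \<le> poset_EH ch n"
    using poset_EH_subseq[OF subseq_remdups_adj] by (simp add: poset_EH_remdups_adj)
  have "alpha ch \<le> length ch"
    by (simp add: alpha_eq_length_remdups_adj)
  then show "poset_EH ch n \<le> poset_EH (rbr_chain (alpha ch)) n + length ch - alpha ch"
    using poset_EH_le_remdups_adj[of ch n]
    by (simp add: poset_EH_remdups_adj alpha_eq_length_remdups_adj)
qed

end
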